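(* Let $g\in\mathbb{R}[\mathbf{x}]_d$ with coefficient vector $(g_0,\mathbf{g})\in\mathbb{R}\times\mathbb{R}^{s(d)-1}$ be such that $\int_{\mathbb{R}^n}|\mathbf{x}^\gamma|e^{-g(\mathbf{x})}d\mathbf{x}<\infty$ for all $\gamma\in\mathbb{N}^n$, and let $y_\gamma=\int_{\mathbb{R}^n}\mathbf{x}^\gamma e^{-g(\mathbf{x})}d\mathbf{x}$. Let $\mathbf{M}^d(\mathbf{y})$ be the $s(d)\times s(d)$ matrix with rows and columns indexed by $\alpha,\beta\in\mathbb{N}^n_d$ and entries $\mathbf{M}^d(\mathbf{y})(\alpha,\beta)=y_\alpha$ if $\beta=0$ and $\mathbf{M}^d(\mathbf{y})(\alpha,\beta)=\frac{|\beta|\,y_{\alpha+\beta}}{n+|\alpha|}$ if $\beta\neq0$. Then $\mathbf{v}=\mathbf{g}$ is the unique solution $\mathbf{v}\in\mathbb{R}^{s(d)-1}$ of $\mathbf{M}^d(\mathbf{y})\begin{bmatrix}-1\\ \mathbf{v}\end{bmatrix}=0$, and $$g_0=\ln\Big(\int_{\mathbb{R}^n}e^{-\tilde g(\mathbf{x})}d\mathbf{x}\Big)-\ln y_0,$$ where $\tilde g\in\mathbb{R}[\mathbf{x}]_d$ has coefficient vector $(0,\mathbf{g})$. In particular $g$ is determined by the moments $y_\gamma$, $|\gamma|\le 2d$.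
   Context: $\mathbb{R}[\mathbf{x}]_d$: real polynomials in $n$ variables of degree $\le d$; $\mathbb{N}^n_d=\{\alpha\in\mathbb{N}^n:|\alpha|\le d\}$; $s(d)=\binom{n+d}{n}$; the coefficient vector of a polynomial is ordered with the constant coefficient (index $\beta=0$) first. *)

theory Defs
  imports "HOL-Analysis.Analysis"
begin

text \<open>Multi-indices on the variable index type 'n (so n = CARD('n)) are functions 'n => nat.\<close>

definition mdeg :: "('n::finite \<Rightarrow> nat) \<Rightarrow> nat" where
  "mdeg \<alpha> = (\<Sum>i\<in>UNIV. \<alpha> i)"

definition midx :: "nat \<Rightarrow> ('n::finite \<Rightarrow> nat) set" where
  "midx d = {\<alpha>. mdeg \<alpha> \<le> d}"

definition mzero :: "'n \<Rightarrow> nat" where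
  "mzero = (\<lambda>_. 0)"

definition madd :: "('n \<Rightarrow> nat) \<Rightarrow> ('n \<Rightarrow> nat) \<Rightarrow> ('n \<Rightarrow> nat)" where
  "madd \<alpha> \<beta> = (\<lambda>i. \<alpha> i + \<beta> i)"

definition monomial :: "('n::finite \<Rightarrow> nat) \<Rightarrow> real ^ 'n \<Rightarrow> real" where
  "monomial \<gamma> x = (\<Prod>i\<in>UNIV. (x $ i) ^ (\<gamma> i))"

definition polyval :: "nat \<Rightarrow> (('n::finite \<Rightarrow> nat) \<Rightarrow> real) \<Rightarrow> real ^ 'n \<Rightarrow> real" where
  "polyval d c x = (\<Sum>\<alpha>\<in>midx d. c \<alpha> * monomial \<alpha> x)"

definition moment :: "nat \<Rightarrow> (('n::finite \<Rightarrow> nat) \<Rightarrow> real) \<Rightarrow> ('n \<Rightarrow> nat) \<Rightarrow> real" where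
  "moment d c \<gamma> = integral\<^sup>L lborel (\<lambda>x. monomial \<gamma> x * exp (- polyval d c x))"

definition momentM :: "nat \<Rightarrow> (('n::finite \<Rightarrow> nat) \<Rightarrow> real) \<Rightarrow> ('n \<Rightarrow> nat) \<Rightarrow> ('n \<Rightarrow> nat) \<Rightarrow> real" where
  "momentM d y \<alpha> \<beta> =
     (if \<beta> = mzero then y \<alpha>
      else real (mdeg \<beta>) * y (madd \<alpha> \<beta>) / (real CARD('n) + real (mdeg \<alpha>)))"

definition extvec :: "(('n \<Rightarrow> nat) \<Rightarrow> real) \<Rightarrow> ('n \<Rightarrow> nat) \<Rightarrow> real" where
  "extvec v \<beta> = (if \<beta> = mzero then -1 else v \<beta>)"

definition moment_integrable :: "nat \<Rightarrow> (('n::finite \<Rightarrow> nat) \<Rightarrow> real) \<Rightarrow> bool" where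
  "moment_integrable d c \<longleftrightarrow>
     (\<forall>\<gamma>. integrable lborel (\<lambda>x. monomial \<gamma> x * exp (- polyval d c x)))"

end

theory Submission
  imports Defs
begin

text \<open>
  The substitution x \<mapsto> t x shows
  that the integral of x^\<alpha> exp (- g (t x)) is t^(-(n + |\<alpha>|)) y_\<alpha>. Differentiating at t = 1 and
  using Euler's identity x \<bullet> grad g = \<Sum>_\<beta> |\<beta>| g_\<beta> x^\<beta> gives
  (n + |\<alpha>|) y_\<alpha> = \<Sum>_\<beta> |\<beta>| g_\<beta> y_(\<alpha>+\<beta>), i.e. [-1; g] lies in the kernel of M^d(y).
  If [-1; v] is another kernel vector, then w_\<beta> = |\<beta>| (v_\<beta> - g_\<beta>) satisfies
  \<Sum>_\<beta> w_\<beta> y_(\<alpha>+\<beta>) = 0 for all \<alpha>, so the integral of q^2 exp (- g) vanishes for the polynomial q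
  with coefficients w; hence q = 0 and v agrees with g off the constant term. The constant term is
  then read off from y_0 = exp (- g_0) \<integral> exp (- (g - g_0)).
\<close>

section \<open>Multi-indices and monomials\<close>

lemma finite_midx: "finite (midx d :: ('n::finite \<Rightarrow> nat) set)"
proof (rule finite_subset)
  show "midx d \<subseteq> (PiE UNIV (\<lambda>_. {..d}) :: ('n \<Rightarrow> nat) set)"
  proof
    fix \<alpha> :: "'n \<Rightarrow> nat" assume "\<alpha> \<in> midx d"
    moreover have "\<alpha> i \<le> mdeg \<alpha>" for i
      unfolding mdeg_def by (rule member_le_sum) auto
    ultimately show "\<alpha> \<in> PiE UNIV (\<lambda>_. {..d})"
      by (auto simp: midx_def intro: le_trans)
  qed
qed (simp add: finite_PiE)

lemma mdeg_mzero [simp]: "mdeg (mzero :: 'n::finite \<Rightarrow> nat) = 0"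
  by (simp add: mdeg_def mzero_def)

lemma mdeg_eq_0_iff: "mdeg (\<beta> :: 'n::finite \<Rightarrow> nat) = 0 \<longleftrightarrow> \<beta> = mzero"
  by (auto simp: mdeg_def mzero_def)

lemma mzero_in_midx [simp]: "(mzero :: 'n::finite \<Rightarrow> nat) \<in> midx d"
  by (simp add: midx_def)

lemma mdeg_madd: "mdeg (madd \<alpha> \<beta>) = mdeg \<alpha> + mdeg (\<beta> :: 'n::finite \<Rightarrow> nat)"
  by (simp add: mdeg_def madd_def sum.distrib)

lemma madd_in_midx_double:
  "\<alpha> \<in> midx d \<Longrightarrow> \<beta> \<in> midx d \<Longrightarrow> madd \<alpha> (\<beta> :: 'n::finite \<Rightarrow> nat) \<in> midx (2 * d)"
  by (simp add: midx_def mdeg_madd)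

lemma midx_mono: "d \<le> k \<Longrightarrow> midx d \<subseteq> (midx k :: ('n::finite \<Rightarrow> nat) set)"
  by (auto simp: midx_def)

lemma monomial_mzero [simp]: "monomial mzero x = 1"
  by (simp add: monomial_def mzero_def)

lemma monomial_madd: "monomial (madd \<alpha> \<beta>) x = monomial \<alpha> x * monomial \<beta> x"
  by (simp add: monomial_def madd_def power_add prod.distrib)

lemma monomial_scaleR: "monomial \<alpha> (t *\<^sub>R x) = t ^ mdeg \<alpha> * monomial \<alpha> x"
  by (simp add: monomial_def mdeg_def power_mult_distrib prod.distrib power_sum)

lemma continuous_on_monomial [continuous_intros]: "continuous_on A (monomial \<alpha>)"
  unfolding monomial_def by (intro continuous_intros)

lemma continuous_on_polyval [continuous_intros]: "continuous_on A (polyval d c)"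
  unfolding polyval_def by (intro continuous_intros)

lemma borel_measurable_monomial [measurable]: "monomial \<alpha> \<in> borel_measurable borel"
  by (intro borel_measurable_continuous_onI continuous_on_monomial)

lemma borel_measurable_polyval [measurable]: "polyval d c \<in> borel_measurable borel"
  by (intro borel_measurable_continuous_onI continuous_on_polyval)

section \<open>Integrals on Euclidean space\<close>

lemma lborel_integral_scaleR:
  fixes f :: "'a::euclidean_space \<Rightarrow> real"
  assumes "s \<noteq> 0" and [measurable]: "f \<in> borel_measurable borel"
  shows "integral\<^sup>L lborel f = \<bar>s\<bar> ^ DIM('a) * integral\<^sup>L lborel (\<lambda>x. f (s *\<^sub>R x))"
proof -
  have "integral\<^sup>L lborel f
      = integral\<^sup>L (density (distr lborel borel (\<lambda>x. 0 + s *\<^sub>R x)) (\<lambda>_. \<bar>s\<bar> ^ DIM('a))) f"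
    by (simp only: lborel_affine[OF assms(1), of "0 :: 'a", symmetric])
  also have "\<dots> = integral\<^sup>L lborel (\<lambda>x. \<bar>s\<bar> ^ DIM('a) * f (s *\<^sub>R x))"
    by (subst integral_density) (auto simp: integral_distr)
  finally show ?thesis by simp
qed

lemma lborel_integrable_scaleR_iff:
  fixes f :: "'a::euclidean_space \<Rightarrow> real"
  assumes "s \<noteq> 0" and [measurable]: "f \<in> borel_measurable borel"
  shows "integrable lborel (\<lambda>x. f (s *\<^sub>R x)) \<longleftrightarrow> integrable lborel f"
proof -
  have "integrable lborel f
      \<longleftrightarrow> integrable (density (distr lborel borel (\<lambda>x. 0 + s *\<^sub>R x)) (\<lambda>_. \<bar>s\<bar> ^ DIM('a))) f"
    by (simp only: lborel_affine[OF assms(1), of "0 :: 'a", symmetric])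
  then show ?thesis using assms(1) by (simp add: integrable_density integrable_distr_eq)
qed

lemma has_real_derivative_inverse_power:
  assumes "t \<noteq> 0" "0 < m"
  shows "((\<lambda>t. - (1 / (real m * t ^ m))) has_real_derivative 1 / t ^ Suc m) (at t)"
proof -
  have "((\<lambda>t. - (1 / (real m * t ^ m))) has_real_derivative
      real m * (real m * t ^ (m - 1)) / (real m * t ^ m)^2) (at t)"
    using assms by (auto intro!: derivative_eq_intros simp: power2_eq_square)
  moreover have "real m * (real m * t ^ (m - 1)) / (real m * t ^ m)^2 = 1 / t ^ Suc m"
    using assms by (cases m) (simp_all add: power2_eq_square)
  ultimately show ?thesis by simp
qed

lemma lborel_integral_inverse_power:
  assumes "0 < a" "a \<le> b" "0 < m"
  shows "(\<integral>t. indicator {a..b} t * (1 / t ^ Suc m) \<partial>lborel) = (1 / a ^ m - 1 / b ^ m) / real m"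
proof -
  have "(\<integral>t. indicator {a..b} t *\<^sub>R (1 / t ^ Suc m) \<partial>lborel)
      = (\<lambda>t. - (1 / (real m * t ^ m))) b - (\<lambda>t. - (1 / (real m * t ^ m))) a"
  proof (rule integral_FTC_atLeastAtMost)
    fix t :: real assume "a \<le> t" "t \<le> b"
    with assms have "((\<lambda>t. - (1 / (real m * t ^ m))) has_real_derivative 1 / t ^ Suc m) (at t)"
      by (intro has_real_derivative_inverse_power) auto
    then show "((\<lambda>t. - (1 / (real m * t ^ m))) has_vector_derivative 1 / t ^ Suc m) (at t within {a..b})"
      by (simp add: has_real_derivative_iff_has_vector_derivative[symmetric] has_field_derivative_at_within)
  next
    show "continuous_on {a..b} (\<lambda>t. 1 / t ^ Suc m)"
      using assms by (intro continuous_intros) auto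
  qed (fact assms)
  then show ?thesis using assms by (simp add: diff_divide_distrib mult.commute)
qed

lemma lborel_integral_ray_slices:
  fixes \<psi> :: "'a::euclidean_space \<Rightarrow> real"
  assumes \<psi>: "integrable lborel \<psi>"
  shows "(\<integral>x. (\<integral>t. indicator {1..2} t * (\<psi> (t *\<^sub>R x) / t) \<partial>lborel) \<partial>lborel)
           = (1 - 1 / 2 ^ DIM('a)) / real DIM('a) * integral\<^sup>L lborel \<psi>"
proof -
  define n where "n = DIM('a)"
  have [measurable]: "\<psi> \<in> borel_measurable borel"
    using \<psi> by (auto dest: borel_measurable_integrable)
  define F where "F t x = indicator {1..2} t * (\<psi> (t *\<^sub>R x) / t)" for t :: real and x :: 'a
  have slice_pos: "(\<integral>x. \<psi> (t *\<^sub>R x) \<partial>lborel) = integral\<^sup>L lborel \<psi> / t ^ n"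
    "(\<integral>x. \<bar>\<psi> (t *\<^sub>R x)\<bar> \<partial>lborel) = (\<integral>x. \<bar>\<psi> x\<bar> \<partial>lborel) / t ^ n"
    "integrable lborel (\<lambda>x. \<psi> (t *\<^sub>R x))" if "0 < t" for t
    using that lborel_integral_scaleR[of t \<psi>] lborel_integral_scaleR[of t "\<lambda>x. \<bar>\<psi> x\<bar>"]
      lborel_integrable_scaleR_iff[of t \<psi>] \<psi>
    by (simp_all add: n_def)
  have slice: "(\<integral>x. F t x \<partial>lborel) = indicator {1..2} t * (1 / t ^ Suc n) * integral\<^sup>L lborel \<psi>"
    and slice_abs: "(\<integral>x. norm (F t x) \<partial>lborel) = indicator {1..2} t * (1 / t ^ Suc n) * (\<integral>x. \<bar>\<psi> x\<bar> \<partial>lborel)"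
    and slice_integrable: "integrable lborel (\<lambda>x. F t x)" for t
  proof -
    consider "t \<notin> {1..2}" | "t \<in> {1..2}" "0 < t" by fastforce
    note cases = this
    show "(\<integral>x. F t x \<partial>lborel) = indicator {1..2} t * (1 / t ^ Suc n) * integral\<^sup>L lborel \<psi>"
      by (cases rule: cases) (simp_all add: F_def slice_pos)
    show "(\<integral>x. norm (F t x) \<partial>lborel) = indicator {1..2} t * (1 / t ^ Suc n) * (\<integral>x. \<bar>\<psi> x\<bar> \<partial>lborel)"
      by (cases rule: cases) (simp_all add: F_def slice_pos abs_mult)
    show "integrable lborel (\<lambda>x. F t x)"
      by (cases rule: cases) (simp_all add: F_def slice_pos)
  qed
  have "set_integrable lborel {1..2::real} (\<lambda>t. 1 / t ^ Suc n)"
    by (intro borel_integrable_atLeastAtMost') (auto intro!: continuous_intros)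
  then have weight: "integrable lborel (\<lambda>t. indicator {1..2::real} t * (1 / t ^ Suc n))"
    by (simp add: set_integrable_def)
  have "integrable (lborel \<Otimes>\<^sub>M lborel) (\<lambda>(t, x). F t x)"
  proof (rule lborel_pair.Fubini_integrable)
    show "integrable lborel (\<lambda>t. \<integral>x. norm ((\<lambda>(t, x). F t x) (t, x)) \<partial>lborel)"
      unfolding case_prod_conv slice_abs by (rule integrable_mult_left[OF weight])
    show "AE t in lborel. integrable lborel (\<lambda>x. (\<lambda>(t, x). F t x) (t, x))"
      by (simp add: slice_integrable)
  qed (simp add: F_def)
  then have "(\<integral>x. (\<integral>t. F t x \<partial>lborel) \<partial>lborel) = (\<integral>t. (\<integral>x. F t x \<partial>lborel) \<partial>lborel)"
    by (rule lborel_pair.Fubini_integral)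
  also have "\<dots> = (1 - 1 / 2 ^ n) / real n * integral\<^sup>L lborel \<psi>"
    unfolding slice integral_mult_left_zero
    using lborel_integral_inverse_power[of 1 2 n] by (simp add: n_def)
  finally show ?thesis by (simp add: F_def n_def)
qed

text \<open>
  Here \<open>\<psi>\<close> plays the role of x \<bullet> grad \<open>\<phi>\<close>. Instead of differentiating
  t \<mapsto> \<integral> \<phi> (t x) dx = t^(-n) \<integral> \<phi> under the integral sign, the derivative is integrated over
  t \<in> [1, 2] and the two integrations are swapped.
\<close>

lemma lborel_integral_radial_derivative:
  fixes \<phi> \<psi> :: "'a::euclidean_space \<Rightarrow> real"
  assumes \<phi>: "integrable lborel \<phi>" and \<psi>: "integrable lborel \<psi>" "continuous_on UNIV \<psi>"
    and deriv: "\<And>x t. 0 < t \<Longrightarrow> ((\<lambda>s. \<phi> (s *\<^sub>R x)) has_real_derivative \<psi> (t *\<^sub>R x) / t) (at t)"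
  shows "integral\<^sup>L lborel \<psi> = - real DIM('a) * integral\<^sup>L lborel \<phi>"
proof -
  define n where "n = DIM('a)"
  define q :: real where "q = 1 - 1 / 2 ^ n"
  have [measurable]: "\<phi> \<in> borel_measurable borel"
    using \<phi> by (auto dest: borel_measurable_integrable)
  have ray: "(\<integral>t. indicator {1..2} t * (\<psi> (t *\<^sub>R x) / t) \<partial>lborel) = \<phi> (2 *\<^sub>R x) - \<phi> x" for x
  proof -
    have "(\<integral>t. indicator {1..2} t *\<^sub>R (\<psi> (t *\<^sub>R x) / t) \<partial>lborel) = \<phi> (2 *\<^sub>R x) - \<phi> (1 *\<^sub>R x)"
    proof (rule integral_FTC_atLeastAtMost[where F = "\<lambda>t. \<phi> (t *\<^sub>R x)"])
      fix t :: real assume "1 \<le> t" "t \<le> 2"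
      then show "((\<lambda>t. \<phi> (t *\<^sub>R x)) has_vector_derivative \<psi> (t *\<^sub>R x) / t) (at t within {1..2})"
        using deriv[of t x]
        by (simp add: has_real_derivative_iff_has_vector_derivative[symmetric] has_field_derivative_at_within)
    next
      show "continuous_on {1..2} (\<lambda>t. \<psi> (t *\<^sub>R x) / t)"
        using \<psi>(2) by (auto intro!: continuous_intros continuous_on_compose2[of UNIV \<psi>])
    qed simp
    then show ?thesis by simp
  qed
  have "integrable lborel (\<lambda>x. \<phi> (2 *\<^sub>R x))"
    using \<phi> lborel_integrable_scaleR_iff[of 2 \<phi>] by simp
  then have "(\<integral>x. (\<integral>t. indicator {1..2} t * (\<psi> (t *\<^sub>R x) / t) \<partial>lborel) \<partial>lborel)
      = - q * integral\<^sup>L lborel \<phi>"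
    unfolding ray using \<phi> lborel_integral_scaleR[of 2 \<phi>] by (simp add: n_def q_def field_simps)
  then have "q / real n * integral\<^sup>L lborel \<psi> = - q * integral\<^sup>L lborel \<phi>"
    using lborel_integral_ray_slices[OF \<psi>(1)] by (simp add: n_def q_def)
  then have "q * (integral\<^sup>L lborel \<psi> / real n + integral\<^sup>L lborel \<phi>) = 0"
    by (simp add: algebra_simps)
  moreover have "(1::real) < 2 ^ n"
    by (rule one_less_power) (simp_all add: n_def)
  then have "q \<noteq> 0"
    by (simp add: q_def)
  ultimately have "integral\<^sup>L lborel \<psi> / real n + integral\<^sup>L lborel \<phi> = 0"
    by simp
  then show ?thesis
    by (simp add: n_def field_simps eq_neg_iff_add_eq_0)
qed

lemma continuous_nonneg_eq_0_if_integral_eq_0: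
  fixes f :: "'a::euclidean_space \<Rightarrow> real"
  assumes "continuous_on UNIV f" "integrable lborel f" "\<And>x. 0 \<le> f x" "integral\<^sup>L lborel f = 0"
  shows "f x = 0"
proof (rule ccontr)
  assume "f x \<noteq> 0"
  have "AE x in lborel. f x = 0"
    using integral_nonneg_eq_0_iff_AE[of lborel f] assms(2-4) by simp
  then have "AE x in lebesgue. f x = 0"
    by (rule AE_completion)
  then obtain N where "negligible N" "{x. f x \<noteq> 0} \<subseteq> N"
    unfolding eventually_ae_filter_negligible by blast
  then have "negligible {x. f x \<noteq> 0}"
    using negligible_subset by blast
  moreover have "open {x. f x \<noteq> 0}"
    using open_Collect_neq[OF assms(1) continuous_on_const] by simp
  ultimately show False
    using open_not_negligible \<open>f x \<noteq> 0\<close> by blast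
qed

section \<open>Polynomials vanishing everywhere\<close>

lemma base_expansion_digits_eq:
  fixes a b :: "nat \<Rightarrow> nat"
  assumes "\<And>k. a k < B" "\<And>k. b k < B"
    and "(\<Sum>k<L. a k * B ^ k) = (\<Sum>k<L. b k * B ^ k)" "k < L"
  shows "a k = b k"
  using assms
proof (induction L arbitrary: a b k)
  case 0
  then show ?case by simp
next
  case (Suc L)
  define A where "A = (\<Sum>k<L. a (Suc k) * B ^ k)"
  define A' where "A' = (\<Sum>k<L. b (Suc k) * B ^ k)"
  have "a 0 + B * A = b 0 + B * A'"
    using Suc.prems(3) unfolding A_def A'_def sum.lessThan_Suc_shift
    by (simp add: sum_distrib_left algebra_simps)
  moreover have "a 0 < B" "b 0 < B"
    using Suc.prems by auto
  ultimately have "(a 0 + B * A) mod B = b 0" "(a 0 + B * A) div B = A'"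
    by simp_all
  then have "a 0 = b 0" "A = A'"
    using \<open>a 0 < B\<close> by simp_all
  show ?case
  proof (cases k)
    case 0
    then show ?thesis using \<open>a 0 = b 0\<close> by simp
  next
    case (Suc k')
    with Suc.prems \<open>A = A'\<close> show ?thesis
      using Suc.IH[of "\<lambda>k. a (Suc k)" "\<lambda>k. b (Suc k)" k'] by (simp add: A_def A'_def)
  qed
qed

text \<open>
  Kronecker substitution x_i = t^(B^e(i)) with B = d + 1: the exponent of t is the number with
  base-B digits \<beta>, so distinct multi-indices of degree at most d give distinct powers of t.
\<close>

lemma kronecker_substitution:
  obtains \<kappa> :: "('n::finite \<Rightarrow> nat) \<Rightarrow> nat" and X :: "real \<Rightarrow> real ^ 'n"
  where "inj_on \<kappa> (midx d)" "\<And>\<beta> t. monomial \<beta> (X t) = t ^ \<kappa> \<beta>"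
proof -
  obtain e :: "'n \<Rightarrow> nat" and L where e: "e ` UNIV = {i. i < L}" "inj e"
    using finite_imp_inj_to_nat_seg[of "UNIV :: 'n set"] by auto
  define B where "B = Suc d"
  define \<kappa> where "\<kappa> \<beta> = (\<Sum>i\<in>UNIV. \<beta> i * B ^ e i)" for \<beta> :: "'n \<Rightarrow> nat"
  have mon: "monomial \<beta> (\<chi> i. t ^ B ^ e i) = t ^ \<kappa> \<beta>" for \<beta> t
    by (simp add: monomial_def \<kappa>_def power_sum power_mult[symmetric] mult.commute)
  define digit where "digit \<beta> k = (if k \<in> range e then \<beta> (inv e k) else 0)" for \<beta> :: "'n \<Rightarrow> nat" and k
  have \<kappa>_digits: "\<kappa> \<beta> = (\<Sum>k<L. digit \<beta> k * B ^ k)" for \<beta>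
  proof -
    have "(\<Sum>k<L. digit \<beta> k * B ^ k) = (\<Sum>k\<in>range e. digit \<beta> k * B ^ k)"
      using e by (intro sum.mono_neutral_right) (auto simp: digit_def)
    also have "\<dots> = (\<Sum>i\<in>UNIV. digit \<beta> (e i) * B ^ e i)"
      using e by (subst sum.reindex) auto
    also have "\<dots> = \<kappa> \<beta>"
      by (simp add: digit_def \<kappa>_def inv_f_f[OF e(2)])
    finally show ?thesis by simp
  qed
  have digit_bound: "digit \<beta> k < B" if "\<beta> \<in> midx d" for \<beta> k
  proof -
    have "\<beta> i \<le> mdeg \<beta>" for i
      unfolding mdeg_def by (rule member_le_sum) auto
    also have "mdeg \<beta> \<le> d"
      using that by (simp add: midx_def)
    finally show ?thesis
      by (simp add: digit_def B_def less_Suc_eq_le)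
  qed
  have "inj_on \<kappa> (midx d)"
  proof (rule inj_onI, rule ext)
    fix \<beta> \<gamma> i assume \<beta>: "\<beta> \<in> midx d" and \<gamma>: "\<gamma> \<in> midx d" and "\<kappa> \<beta> = \<kappa> \<gamma>"
    then have "(\<Sum>k<L. digit \<beta> k * B ^ k) = (\<Sum>k<L. digit \<gamma> k * B ^ k)"
      by (simp add: \<kappa>_digits)
    moreover have "e i < L"
      using e(1) by auto
    ultimately have "digit \<beta> (e i) = digit \<gamma> (e i)"
      using base_expansion_digits_eq[of "digit \<beta>" B "digit \<gamma>" L] digit_bound \<beta> \<gamma> by blast
    then show "\<beta> i = \<gamma> i"
      by (simp add: digit_def inv_f_f[OF e(2)])

  qed
  then show thesis using mon by (rule that)
qed

lemma polyval_eq_0_imp_coeff_eq_0: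
  fixes w :: "('n::finite \<Rightarrow> nat) \<Rightarrow> real"
  assumes "\<And>x. polyval d w x = 0" "\<beta> \<in> midx d"
  shows "w \<beta> = 0"
proof -
  obtain \<kappa> :: "('n \<Rightarrow> nat) \<Rightarrow> nat" and X :: "real \<Rightarrow> real ^ 'n" where inj: "inj_on \<kappa> (midx d)"
    and mon: "\<And>\<beta> t. monomial \<beta> (X t) = t ^ \<kappa> \<beta>"
    using kronecker_substitution[of d] by blast
  define K where "K = Max (\<kappa> ` midx d)"
  have \<kappa>_le: "\<kappa> \<gamma> \<le> K" if "\<gamma> \<in> midx d" for \<gamma>
    unfolding K_def using that finite_midx by (intro Max_ge) auto
  define a where "a k = (\<Sum>\<gamma>\<in>{\<gamma>\<in>midx d. \<kappa> \<gamma> = k}. w \<gamma>)" for k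
  have "(\<Sum>k\<le>K. a k * t ^ k) = 0" for t
  proof -
    have "(\<Sum>k\<le>K. a k * t ^ k) = (\<Sum>\<gamma>\<in>midx d. w \<gamma> * t ^ \<kappa> \<gamma>)"
      unfolding a_def sum_distrib_right using \<kappa>_le finite_midx
      by (subst sum.group[symmetric, where g = \<kappa> and T = "{..K}"]) auto
    also have "\<dots> = 0"
      using assms(1)[of "X t"] by (simp add: polyval_def mon)
    finally show ?thesis .
  qed
  then have "a (\<kappa> \<beta>) = 0"
    using polyfun_eq_0[of a K] \<kappa>_le[OF assms(2)] by blast
  moreover have "{\<gamma>\<in>midx d. \<kappa> \<gamma> = \<kappa> \<beta>} = {\<beta>}"
    using inj assms(2) by (auto dest: inj_onD)
  ultimately show ?thesis by (simp add: a_def)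
qed

section \<open>Moments of exp(-g)\<close>

text \<open>\<open>polyval d (euler_coeffs c)\<close> is the Euler operator x \<bullet> grad applied to \<open>polyval d c\<close>.\<close>

definition euler_coeffs :: "(('n::finite \<Rightarrow> nat) \<Rightarrow> real) \<Rightarrow> ('n \<Rightarrow> nat) \<Rightarrow> real" where
  "euler_coeffs c \<beta> = real (mdeg \<beta>) * c \<beta>"

lemma has_real_derivative_monomial_ray:
  assumes "t \<noteq> 0"
  shows "((\<lambda>s. monomial \<alpha> (s *\<^sub>R x)) has_real_derivative real (mdeg \<alpha>) * monomial \<alpha> (t *\<^sub>R x) / t) (at t)"
proof -
  have "((\<lambda>s. s ^ mdeg \<alpha> * monomial \<alpha> x) has_real_derivative
      real (mdeg \<alpha>) * t ^ (mdeg \<alpha> - 1) * monomial \<alpha> x) (at t)"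
    by (auto intro!: derivative_eq_intros)
  also have "real (mdeg \<alpha>) * t ^ (mdeg \<alpha> - 1) * monomial \<alpha> x = real (mdeg \<alpha>) * monomial \<alpha> (t *\<^sub>R x) / t"
    using assms by (cases "mdeg \<alpha>") (simp_all add: monomial_scaleR)
  finally show ?thesis by (simp only: monomial_scaleR)
qed

lemma has_real_derivative_polyval_ray:
  assumes "t \<noteq> 0"
  shows "((\<lambda>s. polyval d c (s *\<^sub>R x)) has_real_derivative polyval d (euler_coeffs c) (t *\<^sub>R x) / t) (at t)"
  unfolding polyval_def euler_coeffs_def sum_divide_distrib
  by (auto intro!: derivative_eq_intros has_real_derivative_monomial_ray[OF assms] sum.cong)

lemma has_bochner_integral_polyval_moment:
  assumes "moment_integrable d c"
  shows "has_bochner_integral lborel (\<lambda>x. polyval k w x * monomial \<alpha> x * exp (- polyval d c x))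
           (\<Sum>\<beta>\<in>midx k. w \<beta> * moment d c (madd \<alpha> \<beta>))"
proof -
  have "(\<lambda>x. polyval k w x * monomial \<alpha> x * exp (- polyval d c x))
      = (\<lambda>x. \<Sum>\<beta>\<in>midx k. w \<beta> * (monomial (madd \<alpha> \<beta>) x * exp (- polyval d c x)))"
    by (intro ext) (simp add: polyval_def sum_distrib_left sum_distrib_right monomial_madd ac_simps)
  moreover have "has_bochner_integral lborel (\<lambda>x. monomial \<gamma> x * exp (- polyval d c x)) (moment d c \<gamma>)" for \<gamma>
    using assms by (simp add: moment_integrable_def moment_def has_bochner_integral_integrable)
  ultimately show ?thesis
    by (simp add: has_bochner_integral_sum has_bochner_integral_mult_right)
qed

lemma moment_recurrence:
  fixes c :: "('n::finite \<Rightarrow> nat) \<Rightarrow> real"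
  assumes "moment_integrable d c"
  shows "(real CARD('n) + real (mdeg \<alpha>)) * moment d c \<alpha>
           = (\<Sum>\<beta>\<in>midx d. euler_coeffs c \<beta> * moment d c (madd \<alpha> \<beta>))"
proof -
  define \<phi> where "\<phi> x = monomial \<alpha> x * exp (- polyval d c x)" for x
  define \<psi> where "\<psi> x = real (mdeg \<alpha>) * \<phi> x - polyval d (euler_coeffs c) x * \<phi> x" for x
  have \<phi>: "has_bochner_integral lborel \<phi> (moment d c \<alpha>)"
    using assms by (simp add: moment_integrable_def moment_def \<phi>_def[abs_def] has_bochner_integral_integrable)
  have "has_bochner_integral lborel (\<lambda>x. polyval d (euler_coeffs c) x * \<phi> x)
      (\<Sum>\<beta>\<in>midx d. euler_coeffs c \<beta> * moment d c (madd \<alpha> \<beta>))"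
    using has_bochner_integral_polyval_moment[OF assms] by (simp add: \<phi>_def mult.assoc)
  with \<phi> have \<psi>: "has_bochner_integral lborel \<psi>
      (real (mdeg \<alpha>) * moment d c \<alpha> - (\<Sum>\<beta>\<in>midx d. euler_coeffs c \<beta> * moment d c (madd \<alpha> \<beta>)))"
    unfolding \<psi>_def[abs_def] by (intro has_bochner_integral_diff has_bochner_integral_mult_right)
  have deriv: "((\<lambda>s. \<phi> (s *\<^sub>R x)) has_real_derivative \<psi> (t *\<^sub>R x) / t) (at t)" if "0 < t" for x t
    using that unfolding \<phi>_def
    by (auto intro!: derivative_eq_intros has_real_derivative_monomial_ray has_real_derivative_polyval_ray
             simp: \<psi>_def \<phi>_def field_simps)
  have "continuous_on UNIV \<psi>"
    unfolding \<psi>_def \<phi>_def by (intro continuous_intros)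
  then have "integral\<^sup>L lborel \<psi> = - real DIM(real ^ 'n) * integral\<^sup>L lborel \<phi>"
    using lborel_integral_radial_derivative[OF integrable.intros[OF \<phi>]
        integrable.intros[OF \<psi>] _ deriv] by blast
  then show ?thesis
    using \<phi> \<psi> by (simp add: has_bochner_integral_integral_eq algebra_simps)
qed

lemma moment_matrix_injective:
  assumes "moment_integrable d c"
    and kernel: "\<And>\<alpha>. \<alpha> \<in> midx k \<Longrightarrow> (\<Sum>\<beta>\<in>midx k. w \<beta> * moment d c (madd \<alpha> \<beta>)) = 0"
    and "\<beta> \<in> midx k"
  shows "w \<beta> = 0"
proof -
  \<comment> \<open>the quadratic form of the moment matrix at w is the integral of q^2 exp (- g)\<close>
  define q where "q = polyval k w"
  define f where "f x = q x * q x * exp (- polyval d c x)" for x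
  have "f = (\<lambda>x. \<Sum>\<alpha>\<in>midx k. w \<alpha> * (q x * monomial \<alpha> x * exp (- polyval d c x)))"
    unfolding f_def by (intro ext) (simp add: q_def polyval_def sum_distrib_left sum_distrib_right ac_simps)
  then have "has_bochner_integral lborel f
      (\<Sum>\<alpha>\<in>midx k. w \<alpha> * (\<Sum>\<beta>\<in>midx k. w \<beta> * moment d c (madd \<alpha> \<beta>)))"
    unfolding q_def
    by (simp add: has_bochner_integral_sum has_bochner_integral_mult_right
        has_bochner_integral_polyval_moment[OF assms(1)])
  then have f_integrable: "integrable lborel f" and f_integral: "integral\<^sup>L lborel f = 0"
    by (auto simp: has_bochner_integral_iff kernel)
  have "f x = 0" for x
  proof (rule continuous_nonneg_eq_0_if_integral_eq_0[OF _ f_integrable _ f_integral])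
    show "continuous_on UNIV f"
      unfolding f_def q_def by (intro continuous_intros)
  qed (simp add: f_def)
  then have "polyval k w x = 0" for x
    by (simp add: f_def q_def)
  then show ?thesis
    using polyval_eq_0_imp_coeff_eq_0 assms(3) by blast
qed

section \<open>The moment matrix\<close>

lemma card_add_mdeg_neq_0 [simp]: "real CARD('n::finite) + real (mdeg (\<alpha> :: 'n \<Rightarrow> nat)) \<noteq> 0"
  by (simp add: add_nonneg_eq_0_iff)

lemma momentM_extvec_row:
  fixes y v :: "('n::finite \<Rightarrow> nat) \<Rightarrow> real"
  shows "(\<Sum>\<beta>\<in>midx d. momentM d y \<alpha> \<beta> * extvec v \<beta>)
    = (\<Sum>\<beta>\<in>midx d. euler_coeffs v \<beta> * y (madd \<alpha> \<beta>)) / (real CARD('n) + real (mdeg \<alpha>)) - y \<alpha>"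
proof -
  have "momentM d y \<alpha> \<beta> * extvec v \<beta>
      = euler_coeffs v \<beta> * y (madd \<alpha> \<beta>) / (real CARD('n) + real (mdeg \<alpha>)) - (if \<beta> = mzero then y \<alpha> else 0)"
    for \<beta>
    by (simp add: momentM_def extvec_def euler_coeffs_def)
  then show ?thesis
    by (simp add: finite_midx sum_subtractf sum_divide_distrib)
qed

lemma momentM_kernel_iff:
  fixes c :: "('n::finite \<Rightarrow> nat) \<Rightarrow> real"
  assumes "moment_integrable d c"
  shows "(\<forall>\<alpha>\<in>midx d. (\<Sum>\<beta>\<in>midx d. momentM d (moment d c) \<alpha> \<beta> * extvec v \<beta>) = 0)
           \<longleftrightarrow> (\<forall>\<beta>\<in>midx d - {mzero}. v \<beta> = c \<beta>)"
proof -
  define w where "w = euler_coeffs (\<lambda>\<beta>. v \<beta> - c \<beta>)"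
  have "(\<Sum>\<beta>\<in>midx d. momentM d (moment d c) \<alpha> \<beta> * extvec v \<beta>)
      = (\<Sum>\<beta>\<in>midx d. w \<beta> * moment d c (madd \<alpha> \<beta>)) / (real CARD('n) + real (mdeg \<alpha>))" for \<alpha>
  proof -
    have "(\<Sum>\<beta>\<in>midx d. w \<beta> * moment d c (madd \<alpha> \<beta>))
        = (\<Sum>\<beta>\<in>midx d. euler_coeffs v \<beta> * moment d c (madd \<alpha> \<beta>))
          - (real CARD('n) + real (mdeg \<alpha>)) * moment d c \<alpha>"
      unfolding moment_recurrence[OF assms] w_def euler_coeffs_def
      by (simp add: algebra_simps sum_subtractf)
    then show ?thesis
      by (simp add: momentM_extvec_row diff_divide_distrib)
  qed
  then have "(\<forall>\<alpha>\<in>midx d. (\<Sum>\<beta>\<in>midx d. momentM d (moment d c) \<alpha> \<beta> * extvec v \<beta>) = 0)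
      \<longleftrightarrow> (\<forall>\<alpha>\<in>midx d. (\<Sum>\<beta>\<in>midx d. w \<beta> * moment d c (madd \<alpha> \<beta>)) = 0)"
    by simp
  also have "\<dots> \<longleftrightarrow> (\<forall>\<beta>\<in>midx d. w \<beta> = 0)"
    using moment_matrix_injective[OF assms] by auto
  also have "\<dots> \<longleftrightarrow> (\<forall>\<beta>\<in>midx d - {mzero}. v \<beta> = c \<beta>)"
    by (auto simp: w_def euler_coeffs_def mdeg_eq_0_iff)
  finally show ?thesis .
qed

lemma momentM_cong:
  assumes "\<And>\<gamma>. \<gamma> \<in> midx (2 * d) \<Longrightarrow> y \<gamma> = y' \<gamma>" "\<alpha> \<in> midx d" "\<beta> \<in> midx d"
  shows "momentM d y \<alpha> \<beta> = momentM d y' \<alpha> \<beta>"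
  using assms midx_mono[of d "2 * d"] by (auto simp: momentM_def madd_in_midx_double)

section \<open>The constant coefficient\<close>

lemma polyval_split_const: "polyval d c x = c mzero + polyval d (c(mzero := 0)) x"
proof -
  have "polyval d c' x = c' mzero + (\<Sum>\<alpha>\<in>midx d - {mzero}. c' \<alpha> * monomial \<alpha> x)" for c'
    unfolding polyval_def using finite_midx by (subst sum.remove[of _ mzero]) auto
  moreover have "(\<Sum>\<alpha>\<in>midx d - {mzero}. (c(mzero := 0)) \<alpha> * monomial \<alpha> x)
      = (\<Sum>\<alpha>\<in>midx d - {mzero}. c \<alpha> * monomial \<alpha> x)"
    by (intro sum.cong) auto
  ultimately show ?thesis by simp
qed

lemma moment_mzero_eq:
  "moment d c mzero = exp (- c mzero) * (\<integral>x. exp (- polyval d (c(mzero := 0)) x) \<partial>lborel)"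
  unfolding moment_def polyval_split_const[of d c] minus_add_distrib exp_add by simp

lemma moment_mzero_pos:
  assumes "moment_integrable d c"
  shows "0 < moment d c mzero"
proof -
  have int: "integrable lborel (\<lambda>x. exp (- polyval d c x))"
    using assms[unfolded moment_integrable_def, rule_format, of mzero] by simp
  have "moment d c mzero \<noteq> 0"
  proof
    assume "moment d c mzero = 0"
    then have "exp (- polyval d c 0) = 0"
      by (intro continuous_nonneg_eq_0_if_integral_eq_0[OF _ int]) (auto simp: moment_def intro!: continuous_intros)
    then show False by simp
  qed
  moreover have "0 \<le> moment d c mzero"
    unfolding moment_def by (intro integral_nonneg_AE) simp
  ultimately show ?thesis by simp
qed

lemma const_coeff_eq_ln:
  assumes "moment_integrable d c"
  shows "c mzero = ln (\<integral>x. exp (- polyval d (c(mzero := 0)) x) \<partial>lborel) - ln (moment d c mzero)"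
proof -
  define J where "J = (\<integral>x. exp (- polyval d (c(mzero := 0)) x) \<partial>lborel)"
  have "moment d c mzero = exp (- c mzero) * J"
    by (simp add: moment_mzero_eq J_def)
  moreover have "0 < J"
    using moment_mzero_pos[OF assms] calculation by (simp add: zero_less_mult_iff)
  ultimately show ?thesis
    by (simp add: J_def ln_mult)
qed

theorem corollary3:
  fixes d :: nat and c :: "('n::finite \<Rightarrow> nat) \<Rightarrow> real"
  assumes "moment_integrable d c"
  shows "(\<forall>v. (\<forall>\<alpha>\<in>midx d. (\<Sum>\<beta>\<in>midx d. momentM d (moment d c) \<alpha> \<beta> * extvec v \<beta>) = 0)
               \<longleftrightarrow> (\<forall>\<beta>\<in>midx d - {mzero}. v \<beta> = c \<beta>))
       \<and> c mzero = ln (integral\<^sup>L lborel (\<lambda>x. exp (- polyval d (c(mzero := 0)) x)))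
                   - ln (moment d c mzero)
       \<and> (\<forall>c'. moment_integrable d c' \<longrightarrow>
              (\<forall>\<gamma>\<in>midx (2 * d). moment d c' \<gamma> = moment d c \<gamma>) \<longrightarrow>
              (\<forall>\<alpha>\<in>midx d. c' \<alpha> = c \<alpha>))"
proof (intro conjI allI impI)
  show "(\<forall>\<alpha>\<in>midx d. (\<Sum>\<beta>\<in>midx d. momentM d (moment d c) \<alpha> \<beta> * extvec v \<beta>) = 0)
      \<longleftrightarrow> (\<forall>\<beta>\<in>midx d - {mzero}. v \<beta> = c \<beta>)" for v
    by (rule momentM_kernel_iff[OF assms])
  show "c mzero = ln (integral\<^sup>L lborel (\<lambda>x. exp (- polyval d (c(mzero := 0)) x))) - ln (moment d c mzero)"
    by (rule const_coeff_eq_ln[OF assms])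
  fix c' assume c': "moment_integrable d c'"
    and same_moments: "\<forall>\<gamma>\<in>midx (2 * d). moment d c' \<gamma> = moment d c \<gamma>"
  have "\<forall>\<alpha>\<in>midx d. (\<Sum>\<beta>\<in>midx d. momentM d (moment d c') \<alpha> \<beta> * extvec c \<beta>) = 0"
    using momentM_kernel_iff[OF assms, of c] momentM_cong[of d "moment d c'" "moment d c"] same_moments
    by simp
  then have nonconst: "\<forall>\<beta>\<in>midx d - {mzero}. c \<beta> = c' \<beta>"
    using momentM_kernel_iff[OF c'] by blast
  then have "polyval d (c'(mzero := 0)) = polyval d (c(mzero := 0))"
    unfolding polyval_def by (intro ext sum.cong) auto
  moreover have "moment d c' mzero = moment d c mzero"
    using same_moments by simp
  ultimately have "c' mzero = c mzero"
    using const_coeff_eq_ln[OF c'] const_coeff_eq_ln[OF assms] by simp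
  with nonconst show "\<forall>\<alpha>\<in>midx d. c' \<alpha> = c \<alpha>"
    by (metis DiffI singletonD)
qed

end
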